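(* Let $p$ be a polynomial of degree $m$ with $p(t)=dt^m+O(t^{m-1})$, let $q$ be a polynomial of degree $d\ge1$ with $q(t)=t^d+O(t^{d-1})$, let $c\in\mathbb{C}$, $g(z)=\int_0^zp(t)e^{q(t)}dt+c$, suppose $g$ is not of the form $\tilde p e^{\tilde q}$ with polynomials $\tilde p,\tilde q$, let $f(z)=z-g(z)/g'(z)$, and suppose each zero of $g''$ that is not a zero of $g$ or $g'$ is attracted by a periodic cycle of $f$. Then there is $\rho>0$ such that every zero $z_0$ of $g$ which is not a zero of $g'$ and satisfies $|z_0|>\rho$ has $$\mathcal{A}^*(z_0)\supset D\Big(z_0,\frac{1}{3d|z_0|^{d-1}}\Big).$$
   Context: A zero $z_0$ of $g$ that is not a zero of $g'$ is a superattracting fixed point of $f$; $\mathcal{A}^*(z_0)$ denotes its immediate basin of attraction, i.e. the component of the Fatou set of $f$ containing $z_0$. $D(z_0,r)$ is the open disk. *)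

theory Defs
  imports "HOL-Complex_Analysis.Complex_Analysis" "HOL-Computational_Algebra.Polynomial"
begin

text \<open>Newton map of g on the extended plane: None represents the point at infinity.
  Poles of f = z - g/g' are the zeros of g' which are not zeros of g.  At common zeros of
  g and g' the singularity of g/g' is removable with value 0, which agrees with the value
  z - g z / 0 = z computed below.\<close>
definition newton_ext :: "(complex \<Rightarrow> complex) \<Rightarrow> complex \<Rightarrow> complex option" where
  "newton_ext g z = (if deriv g z = 0 \<and> g z \<noteq> 0 then None else Some (z - g z / deriv g z))"

primrec iter :: "(complex \<Rightarrow> complex option) \<Rightarrow> nat \<Rightarrow> complex \<Rightarrow> complex option" where
  "iter F 0 z = Some z"
| "iter F (Suc n) z = Option.bind (iter F n z) F"

definition normal_family :: "complex set \<Rightarrow> (nat \<Rightarrow> complex \<Rightarrow> complex) \<Rightarrow> bool" where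
  "normal_family U fs \<longleftrightarrow>
     (\<forall>r::nat \<Rightarrow> nat. \<exists>s. strict_mono s \<and>
        ((\<exists>h. \<forall>K. compact K \<and> K \<subseteq> U \<longrightarrow> uniform_limit K (\<lambda>k. fs (r (s k))) h sequentially)
         \<or> (\<forall>K. compact K \<and> K \<subseteq> U \<longrightarrow>
              (\<forall>M::real. eventually (\<lambda>k. \<forall>w\<in>K. M < norm (fs (r (s k)) w)) sequentially))))"

definition fatou_set :: "(complex \<Rightarrow> complex option) \<Rightarrow> complex set" where
  "fatou_set F = {z. \<exists>U. open U \<and> z \<in> U \<and> (\<forall>n. \<forall>w\<in>U. iter F n w \<noteq> None)
                     \<and> normal_family U (\<lambda>n w. the (iter F n w))}"

definition immediate_basin :: "(complex \<Rightarrow> complex option) \<Rightarrow> complex \<Rightarrow> complex set" where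
  "immediate_basin F z0 = connected_component_set (fatou_set F) z0"

definition attracted_by_cycle :: "(complex \<Rightarrow> complex option) \<Rightarrow> complex \<Rightarrow> bool" where
  "attracted_by_cycle F z \<longleftrightarrow>
     (\<exists>xi k. k \<ge> 1 \<and> iter F k xi = Some xi \<and> (\<forall>n. iter F n z \<noteq> None) \<and>
        (\<lambda>n. the (iter F (n * k) z)) \<longlonglongrightarrow> xi)"

end

theory Submission
  imports Defs
begin

(* Write H = p e^q = g'.  Near a point z0 of large modulus, q' is close to d z0^(d-1) and p is close
   to its leading term, so on the disc D of radius 1/(3 d |z0|^(d-1)) the value of q moves by at most
   11/30 and H varies by at most 9/10 of its size along segments from z0.  If g z0 = 0, then
   z - g z / H z - z0 = (1 / H z) * integral over [z0, z] of (H z - H xi) d xi, so Newton's map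
   contracts D towards z0 by the factor 9/10.  Its iterates therefore converge uniformly to z0 on D,
   which puts D into the Fatou set and, D being connected, into the immediate basin of z0. *)

lemma norm_power_diff_le:
  fixes z \<xi> :: complex and n :: nat
  assumes "norm z \<ge> 1" "norm (\<xi> - z) \<le> 1"
  shows "norm (\<xi> ^ n - z ^ n) * norm z \<le> real n * 2 ^ n * norm z ^ n"
proof (cases n)
  case 0
  then show ?thesis by simp
next
  case (Suc k)
  have "norm (\<xi> ^ n - z ^ n) \<le> real n * (2 * norm z) ^ (n - 1) * norm (\<xi> - z)"
  proof (rule field_differentiable_bound[of "cball z 1" "\<lambda>x. x ^ n" "\<lambda>x. of_nat n * x ^ (n - 1)"])
    show "((\<lambda>x. x ^ n) has_field_derivative of_nat n * x ^ (n - 1)) (at x within cball z 1)" for x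
      by (rule DERIV_subset[OF _ subset_UNIV]) (auto intro!: derivative_eq_intros)
    show "norm (of_nat n * x ^ (n - 1)) \<le> real n * (2 * norm z) ^ (n - 1)" if "x \<in> cball z 1" for x
    proof -
      have "norm x \<le> 2 * norm z"
        using that assms norm_triangle_sub[of x z] by (simp add: dist_norm norm_minus_commute)
      then show ?thesis
        unfolding norm_mult norm_power norm_of_nat by (intro mult_left_mono power_mono) auto
    qed
  qed (use assms in \<open>auto simp: dist_norm norm_minus_commute\<close>)
  also have "\<dots> \<le> real n * (2 * norm z) ^ k"
    using assms Suc by (simp add: mult_left_le)
  finally have "norm (\<xi> ^ n - z ^ n) * norm z \<le> real n * (2 * norm z) ^ k * norm z"
    by (simp add: mult_right_mono)
  also have "\<dots> = real n * 2 ^ k * norm z ^ n"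
    using Suc by (simp add: power_mult_distrib)
  also have "\<dots> \<le> real n * 2 ^ n * norm z ^ n"
    using Suc by (intro mult_right_mono mult_left_mono) auto
  finally show ?thesis .
qed

lemma poly_minus_leading_term_le:
  fixes P :: "complex poly"
  obtains K where "\<And>z \<xi>. norm z \<ge> 1 \<Longrightarrow> norm (\<xi> - z) \<le> 1 \<Longrightarrow>
           norm (poly P \<xi> - lead_coeff P * z ^ degree P) * norm z \<le> K * norm z ^ degree P"
proof
  define n where "n = degree P"
  define K where "K = (\<Sum>i<n. norm (coeff P i)) * 2 ^ n + norm (lead_coeff P) * real n * 2 ^ n"
  fix z \<xi> :: complex
  assume z: "norm z \<ge> 1" and \<xi>: "norm (\<xi> - z) \<le> 1"
  have "norm \<xi> \<le> 2 * norm z"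
    using norm_triangle_sub[of \<xi> z] \<xi> z by simp
  have lower_terms: "norm (\<Sum>i<n. coeff P i * \<xi> ^ i) * norm z
      \<le> (\<Sum>i<n. norm (coeff P i)) * 2 ^ n * norm z ^ n"
  proof -
    have "norm (\<Sum>i<n. coeff P i * \<xi> ^ i) * norm z \<le> (\<Sum>i<n. norm (coeff P i) * norm \<xi> ^ i) * norm z"
      by (intro mult_right_mono order.trans[OF norm_sum]) (auto simp: norm_mult norm_power)
    also have "\<dots> = (\<Sum>i<n. norm (coeff P i) * (norm \<xi> ^ i * norm z))"
      by (simp add: sum_distrib_right mult.assoc)
    also have "\<dots> \<le> (\<Sum>i<n. norm (coeff P i) * (2 ^ n * norm z ^ n))"
    proof (intro sum_mono mult_left_mono)
      fix i assume "i \<in> {..<n}"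
      have "norm \<xi> ^ i * norm z \<le> (2 * norm z) ^ i * norm z"
        using \<open>norm \<xi> \<le> 2 * norm z\<close> by (intro mult_right_mono power_mono) auto
      also have "\<dots> = 2 ^ i * norm z ^ Suc i" by (simp add: power_mult_distrib)
      also have "\<dots> \<le> 2 ^ n * norm z ^ n"
        using \<open>i \<in> {..<n}\<close> z by (intro mult_mono power_increasing) auto
      finally show "norm \<xi> ^ i * norm z \<le> 2 ^ n * norm z ^ n" .
    qed auto
    finally show ?thesis by (simp add: sum_distrib_right mult.assoc)
  qed
  have leading_term: "norm (lead_coeff P * (\<xi> ^ n - z ^ n)) * norm z
      \<le> norm (lead_coeff P) * real n * 2 ^ n * norm z ^ n"
    using norm_power_diff_le[OF z \<xi>, of n] by (simp add: norm_mult mult.assoc mult_left_mono)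
  have "poly P \<xi> = (\<Sum>i<n. coeff P i * \<xi> ^ i) + lead_coeff P * \<xi> ^ n"
    by (simp add: poly_altdef n_def lessThan_Suc_atMost[symmetric])
  then have "poly P \<xi> - lead_coeff P * z ^ n =
      (\<Sum>i<n. coeff P i * \<xi> ^ i) + lead_coeff P * (\<xi> ^ n - z ^ n)"
    by (simp add: algebra_simps)
  then have "norm (poly P \<xi> - lead_coeff P * z ^ n) * norm z \<le>
      norm (\<Sum>i<n. coeff P i * \<xi> ^ i) * norm z + norm (lead_coeff P * (\<xi> ^ n - z ^ n)) * norm z"
    by (metis distrib_right mult_right_mono norm_ge_zero norm_triangle_ineq)
  also have "\<dots> \<le> K * norm z ^ n"
    using lower_terms leading_term unfolding K_def by (simp add: distrib_right)
  finally show "norm (poly P \<xi> - lead_coeff P * z ^ degree P) * norm z \<le> K * norm z ^ degree P"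
    by (simp add: n_def)
qed

lemma poly_near_leading_term:
  fixes P :: "complex poly" and \<epsilon> :: real
  assumes "P \<noteq> 0" "\<epsilon> > 0"
  obtains \<rho> where "\<rho> \<ge> 1"
    and "\<And>z \<xi>. norm z > \<rho> \<Longrightarrow> norm (\<xi> - z) \<le> 1 \<Longrightarrow>
           norm (poly P \<xi> - lead_coeff P * z ^ degree P) \<le> \<epsilon> * norm (lead_coeff P * z ^ degree P)"
proof -
  obtain K where K: "\<And>z \<xi>. norm z \<ge> 1 \<Longrightarrow> norm (\<xi> - z) \<le> 1 \<Longrightarrow>
      norm (poly P \<xi> - lead_coeff P * z ^ degree P) * norm z \<le> K * norm z ^ degree P"
    using poly_minus_leading_term_le by blast
  define a where "a = \<epsilon> * norm (lead_coeff P)"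
  have "a > 0" using assms by (simp add: a_def)
  show ?thesis
  proof
    show "max 1 (K / a) \<ge> 1" by simp
    fix z \<xi> :: complex
    assume z: "norm z > max 1 (K / a)" and \<xi>: "norm (\<xi> - z) \<le> 1"
    have "norm (poly P \<xi> - lead_coeff P * z ^ degree P) * norm z \<le> K * norm z ^ degree P"
      using K z \<xi> by simp
    also have "\<dots> \<le> (a * norm z) * norm z ^ degree P"
      using z \<open>a > 0\<close> by (intro mult_right_mono) (auto simp: field_simps)
    also have "\<dots> = (a * norm z ^ degree P) * norm z"
      by simp
    finally have "norm (poly P \<xi> - lead_coeff P * z ^ degree P) \<le> a * norm z ^ degree P"
      by (rule mult_right_le_imp_le) (use z in auto)
    then show "norm (poly P \<xi> - lead_coeff P * z ^ degree P) \<le> \<epsilon> * norm (lead_coeff P * z ^ degree P)"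
      by (simp add: a_def norm_mult norm_power mult.assoc)
  qed
qed

lemma norm_sub_mult_exp_le:
  fixes a b u w :: complex
  assumes u: "norm u \<le> 11/30" and a: "norm (a - w) \<le> norm w / 40" and b: "norm (b - w) \<le> norm w / 40"
  shows "norm (a - b * exp u) \<le> 9/10 * norm a"
proof -
  have "norm (exp u - 1) \<le> 11/20"
    using norm_exp_bounds(2)[of u] u by simp
  then have exp_u: "norm (exp u) \<le> 31/20"
    using norm_triangle_sub[of "exp u" 1] by simp
  have "norm w \<le> 40/39 * norm a"
    using a norm_triangle_sub[of w a] by (simp add: norm_minus_commute)
  moreover have "norm (a - b) \<le> norm w / 20"
    using a b norm_triangle_ineq4[of "a - w" "b - w"] by simp
  ultimately have ab: "norm (a - b) \<le> 2/39 * norm a"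
    by simp
  have "a - b * exp u = a * (1 - exp u) + (a - b) * exp u"
    by (simp add: algebra_simps)
  also have "norm \<dots> \<le> norm a * norm (exp u - 1) + norm (a - b) * norm (exp u)"
    by (metis norm_minus_commute norm_mult norm_triangle_ineq)
  also have "\<dots> \<le> norm a * (11/20) + (2/39 * norm a) * (31/20)"
    using \<open>norm (exp u - 1) \<le> 11/20\<close> exp_u ab by (intro add_mono mult_mono) auto
  also have "\<dots> \<le> 9/10 * norm a"
    by simp
  finally show ?thesis .
qed

lemma exp_poly_small_variation:
  fixes p q :: "complex poly" and w z0 z \<xi> :: complex and L r :: real
  defines "H \<equiv> \<lambda>t. poly p t * exp (poly q t)"
  assumes Lr: "L * r \<le> 11/30"
    and q': "\<And>x. x \<in> ball z0 r \<Longrightarrow> norm (poly (pderiv q) x) \<le> L"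
    and p: "\<And>x. x \<in> ball z0 r \<Longrightarrow> norm (poly p x - w) \<le> norm w / 40"
    and "w \<noteq> 0" and z: "z \<in> ball z0 r" and \<xi>: "\<xi> \<in> closed_segment z0 z"
  shows "H z \<noteq> 0 \<and> norm (H z - H \<xi>) \<le> 9/10 * norm (H z)"
proof
  have "z0 \<in> ball z0 r"
    using z by (metis centre_in_ball ball_eq_empty empty_iff not_le)
  then have "\<xi> \<in> ball z0 r"
    using \<xi> z closed_segment_subset[of z0 "ball z0 r" z] by auto
  have "L \<ge> 0"
    using q'[OF \<open>z0 \<in> ball z0 r\<close>] by (meson norm_ge_zero order_trans)
  have "norm (poly q \<xi> - poly q z) \<le> L * norm (\<xi> - z)"
    by (rule field_differentiable_bound[OF convex_ball _ q' \<open>\<xi> \<in> ball z0 r\<close> z])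
       (auto intro: DERIV_subset[OF poly_DERIV subset_UNIV])
  also have "\<dots> \<le> L * r"
    using dist_in_closed_segment[OF \<xi>] z \<open>L \<ge> 0\<close>
    by (intro mult_left_mono) (auto simp: dist_norm norm_minus_commute)
  finally have u: "norm (poly q \<xi> - poly q z) \<le> 11/30"
    using Lr by linarith
  have "norm (poly p z - w) < norm w"
    using p[OF z] \<open>w \<noteq> 0\<close> zero_less_norm_iff[of w] by linarith
  then show "H z \<noteq> 0"
    unfolding H_def by auto
  have "H z - H \<xi> = exp (poly q z) * (poly p z - poly p \<xi> * exp (poly q \<xi> - poly q z))"
    unfolding H_def by (simp add: algebra_simps flip: exp_add)
  also have "norm \<dots> \<le> norm (exp (poly q z)) * (9/10 * norm (poly p z))"
    unfolding norm_mult
    by (intro mult_left_mono norm_sub_mult_exp_le[OF u p[OF z] p[OF \<open>\<xi> \<in> ball z0 r\<close>]]) auto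
  also have "\<dots> = 9/10 * norm (H z)"
    unfolding H_def by (simp add: norm_mult)
  finally show "norm (H z - H \<xi>) \<le> 9/10 * norm (H z)" .
qed

lemma exp_poly_small_variation_at_infinity:
  fixes p q :: "complex poly"
  defines "H \<equiv> \<lambda>t. poly p t * exp (poly q t)"
  assumes "p \<noteq> 0" "degree q \<ge> 1" "lead_coeff q = 1"
  obtains \<rho> where "\<rho> \<ge> 1"
    and "\<And>z0 z \<xi>. norm z0 > \<rho> \<Longrightarrow>
           z \<in> ball z0 (1 / (3 * real (degree q) * norm z0 ^ (degree q - 1))) \<Longrightarrow>
           \<xi> \<in> closed_segment z0 z \<Longrightarrow> H z \<noteq> 0 \<and> norm (H z - H \<xi>) \<le> 9/10 * norm (H z)"
proof -
  define d where "d = degree q"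
  have "pderiv q \<noteq> 0"
    using assms(3) by (simp add: pderiv_eq_0_iff)
  moreover have "degree (pderiv q) = d - 1" "lead_coeff (pderiv q) = of_nat d"
    using assms(3,4) by (simp_all add: d_def coeff_pderiv degree_pderiv)
  ultimately obtain \<rho>q where "\<rho>q \<ge> 1" and \<rho>q: "\<And>z \<xi>. norm z > \<rho>q \<Longrightarrow> norm (\<xi> - z) \<le> 1 \<Longrightarrow>
      norm (poly (pderiv q) \<xi> - of_nat d * z ^ (d - 1)) \<le> 1/10 * norm (of_nat d * z ^ (d - 1))"
    using poly_near_leading_term[of "pderiv q" "1/10"] by auto
  obtain \<rho>p where \<rho>p: "\<And>z \<xi>. norm z > \<rho>p \<Longrightarrow> norm (\<xi> - z) \<le> 1 \<Longrightarrow>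
      norm (poly p \<xi> - lead_coeff p * z ^ degree p) \<le> 1/40 * norm (lead_coeff p * z ^ degree p)"
    by (rule poly_near_leading_term[of p "1/40"]) (use assms(2) in auto)
  show ?thesis
  proof
    show "max \<rho>q \<rho>p \<ge> 1"
      using \<open>\<rho>q \<ge> 1\<close> by simp
    fix z0 z \<xi> :: complex
    assume z0: "norm z0 > max \<rho>q \<rho>p"
      and z: "z \<in> ball z0 (1 / (3 * real (degree q) * norm z0 ^ (degree q - 1)))"
      and \<xi>: "\<xi> \<in> closed_segment z0 z"
    define A where "A = real d * norm z0 ^ (d - 1)"
    have "norm z0 \<ge> 1"
      using z0 \<open>\<rho>q \<ge> 1\<close> by simp
    then have "A \<ge> 1"
      unfolding A_def using assms(3) d_def mult_mono[of 1 "real d" 1 "norm z0 ^ (d - 1)"] by simp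
    define r where "r = 1 / (3 * A)"
    have "r \<le> 1"
      using \<open>A \<ge> 1\<close> by (simp add: r_def)
    then have near: "norm (x - z0) \<le> 1" if "x \<in> ball z0 r" for x
      using that by (simp add: dist_norm norm_minus_commute)
    show "H z \<noteq> 0 \<and> norm (H z - H \<xi>) \<le> 9/10 * norm (H z)"
      unfolding H_def
    proof (rule exp_poly_small_variation)
      show "11/10 * A * r \<le> 11/30"
        using \<open>A \<ge> 1\<close> by (simp add: r_def)
      show "norm (poly (pderiv q) x) \<le> 11/10 * A" if "x \<in> ball z0 r" for x
      proof -
        have "norm (poly (pderiv q) x - of_nat d * z0 ^ (d - 1)) \<le> A / 10"
          using \<rho>q[OF _ near[OF that]] z0 by (simp add: A_def norm_mult norm_power)
        moreover have "norm (of_nat d * z0 ^ (d - 1) :: complex) = A"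
          by (simp add: A_def norm_mult norm_power)
        ultimately show ?thesis
          using norm_triangle_sub[of "poly (pderiv q) x" "of_nat d * z0 ^ (d - 1)"] by simp
      qed
      show "norm (poly p x - lead_coeff p * z0 ^ degree p) \<le> norm (lead_coeff p * z0 ^ degree p) / 40"
        if "x \<in> ball z0 r" for x
        using \<rho>p[OF _ near[OF that]] z0 by simp
      show "lead_coeff p * z0 ^ degree p \<noteq> 0"
        using assms(2) \<open>norm z0 \<ge> 1\<close> by auto
      show "z \<in> ball z0 r"
        using z by (simp add: r_def A_def d_def mult.assoc)
    qed (rule \<xi>)
  qed
qed

lemma newton_step_contraction:
  fixes g H :: "complex \<Rightarrow> complex"
  assumes g': "\<And>w. w \<in> closed_segment z0 z \<Longrightarrow> (g has_field_derivative H w) (at w)"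
    and "g z0 = 0" "H z \<noteq> 0"
    and H: "\<And>\<xi>. \<xi> \<in> closed_segment z0 z \<Longrightarrow> norm (H z - H \<xi>) \<le> \<theta> * norm (H z)"
  shows "norm (z - g z / H z - z0) \<le> \<theta> * norm (z - z0)"
proof -
  have "(H has_contour_integral g z) (linepath z0 z)"
    using contour_integral_primitive[of "closed_segment z0 z" g H "linepath z0 z"] g' \<open>g z0 = 0\<close>
    by (simp add: has_field_derivative_at_within)
  then have "((\<lambda>\<xi>. H z - H \<xi>) has_contour_integral (H z * (z - z0) - g z)) (linepath z0 z)"
    by (rule has_contour_integral_diff[OF has_contour_integral_const_linepath])
  then have "norm (H z * (z - z0) - g z) \<le> \<theta> * norm (H z) * norm (z - z0)"
    by (rule has_contour_integral_bound_linepath) (use H H[of z] in auto)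
  moreover have "z - g z / H z - z0 = (H z * (z - z0) - g z) / H z"
    using \<open>H z \<noteq> 0\<close> by (simp add: field_simps)
  ultimately show ?thesis
    using \<open>H z \<noteq> 0\<close> by (simp add: norm_divide divide_le_eq mult_ac)
qed

lemma has_field_derivative_contour_integral_linepath:
  fixes H :: "complex \<Rightarrow> complex"
  assumes "H holomorphic_on UNIV"
  shows "((\<lambda>z. contour_integral (linepath a z) H) has_field_derivative H z) (at z)"
proof -
  obtain G where G: "\<And>x. (G has_field_derivative H x) (at x)"
    using holomorphic_convex_primitive'[OF convex_UNIV open_UNIV assms] by auto
  have "contour_integral (linepath a z) H = G z - G a" for z
    using contour_integral_primitive[of UNIV G H "linepath a z"] G
    by (simp add: contour_integral_unique)
  then show ?thesis
    by (auto intro!: derivative_eq_intros G)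
qed

lemma subseq_constant_or_tendsto_at_top:
  fixes f :: "nat \<Rightarrow> nat"
  obtains s where "strict_mono s" and "(\<exists>N. \<forall>k. f (s k) = N) \<or> filterlim (\<lambda>k. f (s k)) at_top sequentially"
proof (cases "\<exists>N. infinite {k. f k = N}")
  case True
  then obtain M where M: "infinite {k. f k = M}" by blast
  show ?thesis
  proof (rule that)
    show "strict_mono (enumerate {k. f k = M})"
      using strict_mono_enumerate[OF M] .
    show "(\<exists>N. \<forall>k. f (enumerate {k. f k = M} k) = N) \<or> filterlim (\<lambda>k. f (enumerate {k. f k = M} k)) at_top sequentially"
      using enumerate_in_set[OF M] by blast
  qed
next
  case False
  have "filterlim f at_top sequentially"
    unfolding filterlim_at_top
  proof
    fix Z
    have "{k. f k < Z} = (\<Union>N<Z. {k. f k = N})" by auto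
    then have "finite {k. f k < Z}"
      using False by auto
    then obtain M where M: "\<And>k. f k < Z \<Longrightarrow> k \<le> M"
      by (auto simp: finite_nat_set_iff_bounded_le)
    have "Z \<le> f k" if "k \<ge> Suc M" for k
      using M[of k] that by linarith
    then show "eventually (\<lambda>k. Z \<le> f k) sequentially"
      unfolding eventually_sequentially by blast
  qed
  then show ?thesis
    using that[of id] strict_mono_id by simp
qed

lemma uniform_limit_imp_normal_family:
  assumes "uniform_limit U fs h sequentially"
  shows "normal_family U fs"
  unfolding normal_family_def
proof
  fix r :: "nat \<Rightarrow> nat"
  obtain s where "strict_mono s"
    and "(\<exists>N. \<forall>k. r (s k) = N) \<or> filterlim (\<lambda>k. r (s k)) at_top sequentially"
    using subseq_constant_or_tendsto_at_top by blast
  have "\<exists>h. \<forall>K. compact K \<and> K \<subseteq> U \<longrightarrow> uniform_limit K (\<lambda>k. fs (r (s k))) h sequentially"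
  proof (cases "\<exists>N. \<forall>k. r (s k) = N")
    case True
    then obtain N where "\<And>k. r (s k) = N" by blast
    then show ?thesis
      by (intro exI[of _ "fs N"] allI impI) (simp add: uniform_limit_const)
  next
    case False
    with \<open>(\<exists>N. \<forall>k. r (s k) = N) \<or> filterlim (\<lambda>k. r (s k)) at_top sequentially\<close>
    have "uniform_limit U (\<lambda>k. fs (r (s k))) h sequentially"
      using filterlim_compose[OF assms] by auto
    then show ?thesis
      using uniform_limit_on_subset by blast
  qed
  with \<open>strict_mono s\<close> show "\<exists>s. strict_mono s \<and>
      ((\<exists>h. \<forall>K. compact K \<and> K \<subseteq> U \<longrightarrow> uniform_limit K (\<lambda>k. fs (r (s k))) h sequentially) \<or>
       (\<forall>K. compact K \<and> K \<subseteq> U \<longrightarrow> (\<forall>M. \<forall>\<^sub>F k in sequentially. \<forall>w\<in>K. M < norm (fs (r (s k)) w))))"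
    by blast
qed

lemma iter_contraction:
  fixes F :: "complex \<Rightarrow> complex option" and N :: "complex \<Rightarrow> complex"
  assumes "0 \<le> \<theta>" "\<theta> \<le> 1"
    and F: "\<And>z. z \<in> ball z0 r \<Longrightarrow> F z = Some (N z)"
    and N: "\<And>z. z \<in> ball z0 r \<Longrightarrow> norm (N z - z0) \<le> \<theta> * norm (z - z0)"
    and z: "z \<in> ball z0 r"
  shows "iter F n z = Some ((N ^^ n) z) \<and> norm ((N ^^ n) z - z0) \<le> \<theta> ^ n * norm (z - z0)"
proof (induction n)
  case 0
  then show ?case by simp
next
  case (Suc n)
  define y where "y = (N ^^ n) z"
  have "\<theta> ^ n * norm (z - z0) \<le> norm (z - z0)"
    using assms(1,2) by (simp add: mult_left_le_one_le power_le_one)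
  then have "y \<in> ball z0 r"
    using Suc.IH z by (simp add: y_def dist_norm norm_minus_commute)
  have "norm (N y - z0) \<le> \<theta> * (\<theta> ^ n * norm (z - z0))"
    using N[OF \<open>y \<in> ball z0 r\<close>] mult_left_mono[OF conjunct2[OF Suc.IH] \<open>0 \<le> \<theta>\<close>]
    by (simp add: y_def)
  then show ?case
    using Suc.IH F[OF \<open>y \<in> ball z0 r\<close>] by (simp add: y_def mult.assoc)
qed

lemma ball_subset_immediate_basin:
  fixes F :: "complex \<Rightarrow> complex option" and N :: "complex \<Rightarrow> complex"
  assumes "0 \<le> \<theta>" "\<theta> < 1"
    and F: "\<And>z. z \<in> ball z0 r \<Longrightarrow> F z = Some (N z)"
    and N: "\<And>z. z \<in> ball z0 r \<Longrightarrow> norm (N z - z0) \<le> \<theta> * norm (z - z0)"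
  shows "ball z0 r \<subseteq> immediate_basin F z0"
proof (cases "r > 0")
  case True
  have iter: "iter F n z = Some ((N ^^ n) z) \<and> norm ((N ^^ n) z - z0) \<le> \<theta> ^ n * norm (z - z0)"
    if "z \<in> ball z0 r" for z n
    using assms(1) less_imp_le[OF assms(2)] F N that by (rule iter_contraction)
  have "uniform_limit (ball z0 r) (\<lambda>n w. the (iter F n w)) (\<lambda>_. z0) sequentially"
  proof (rule uniform_limitI)
    fix e :: real assume "e > 0"
    have "(\<lambda>n. \<theta> ^ n) \<longlonglongrightarrow> 0"
      using assms(1,2) by (intro LIMSEQ_power_zero) auto
    then have "(\<lambda>n. \<theta> ^ n * r) \<longlonglongrightarrow> 0"
      by (rule tendsto_mult_left_zero)
    then have "eventually (\<lambda>n. \<theta> ^ n * r < e) sequentially"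
      using \<open>e > 0\<close> by (simp add: order_tendsto_iff)
    then show "eventually (\<lambda>n. \<forall>w\<in>ball z0 r. dist (the (iter F n w)) z0 < e) sequentially"
    proof (rule eventually_mono, intro ballI)
      fix n w assume "\<theta> ^ n * r < e" and w: "w \<in> ball z0 r"
      have "\<theta> ^ n * norm (w - z0) \<le> \<theta> ^ n * r"
        using w assms(1) by (intro mult_left_mono) (auto simp: dist_norm norm_minus_commute)
      with \<open>\<theta> ^ n * r < e\<close> show "dist (the (iter F n w)) z0 < e"
        using iter[OF w, of n] by (simp add: dist_norm)
    qed
  qed
  then have "normal_family (ball z0 r) (\<lambda>n w. the (iter F n w))"
    by (rule uniform_limit_imp_normal_family)
  then have "ball z0 r \<subseteq> fatou_set F"
    unfolding fatou_set_def using iter by blast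
  moreover have "z0 \<in> ball z0 r"
    using True by simp
  ultimately show ?thesis
    unfolding immediate_basin_def by (metis connected_ball connected_component_maximal)
qed (simp add: ball_empty)

theorem lemma7p4:
  fixes p q :: "complex poly" and c :: complex and g :: "complex \<Rightarrow> complex"
  assumes "degree q \<ge> 1"
    and "lead_coeff q = 1"
    and "lead_coeff p = of_nat (degree q)"
    and "g = (\<lambda>z. contour_integral (linepath 0 z) (\<lambda>t. poly p t * exp (poly q t)) + c)"
    and "\<not> (\<exists>pt qt :: complex poly. \<forall>z. g z = poly pt z * exp (poly qt z))"
    and "\<forall>z. deriv (deriv g) z = 0 \<and> g z \<noteq> 0 \<and> deriv g z \<noteq> 0
             \<longrightarrow> attracted_by_cycle (newton_ext g) z"
  shows "\<exists>\<rho>>0. \<forall>z0. g z0 = 0 \<and> deriv g z0 \<noteq> 0 \<and> norm z0 > \<rho> \<longrightarrow>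
           ball z0 (1 / (3 * real (degree q) * norm z0 ^ (degree q - 1)))
             \<subseteq> immediate_basin (newton_ext g) z0"
proof -
  define H where "H = (\<lambda>t. poly p t * exp (poly q t))"
  have g': "(g has_field_derivative H z) (at z)" for z
    unfolding assms(4) H_def
    by (auto intro!: derivative_eq_intros has_field_derivative_contour_integral_linepath holomorphic_intros)
  have "p \<noteq> 0"
    using assms(1,3) by auto
  obtain \<rho> where "\<rho> \<ge> 1" and small_variation: "\<And>z0 z \<xi>. norm z0 > \<rho> \<Longrightarrow>
      z \<in> ball z0 (1 / (3 * real (degree q) * norm z0 ^ (degree q - 1))) \<Longrightarrow>
      \<xi> \<in> closed_segment z0 z \<Longrightarrow> H z \<noteq> 0 \<and> norm (H z - H \<xi>) \<le> 9/10 * norm (H z)"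
    using exp_poly_small_variation_at_infinity[OF \<open>p \<noteq> 0\<close> assms(1,2)] unfolding H_def by blast
  show ?thesis
  proof (intro exI[of _ \<rho>] conjI allI impI)
    show "\<rho> > 0"
      using \<open>\<rho> \<ge> 1\<close> by simp
    fix z0 assume z0: "g z0 = 0 \<and> deriv g z0 \<noteq> 0 \<and> norm z0 > \<rho>"
    let ?B = "ball z0 (1 / (3 * real (degree q) * norm z0 ^ (degree q - 1)))"
    have "newton_ext g z = Some (z - g z / H z)" if "z \<in> ?B" for z
      using small_variation[of z0 z z] z0 that DERIV_imp_deriv[OF g']
      by (simp add: newton_ext_def)
    moreover have "norm (z - g z / H z - z0) \<le> 9/10 * norm (z - z0)" if "z \<in> ?B" for z
      using small_variation[of z0 z] z0 that by (intro newton_step_contraction g') auto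
    ultimately show "?B \<subseteq> immediate_basin (newton_ext g) z0"
      by (intro ball_subset_immediate_basin[of "9/10"]) auto
  qed
qed

end
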